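(* Let $A,G,Q\in\mathbb{C}^{n\times n}$ with $G=G^*$, $Q=Q^*$, and let $\mathbf{X}$ be an interval matrix containing at least one solution of $A^*X+XA+Q=XGX$. If every matrix $A-GM$ with $M\in\mathbf{X}$ is Hurwitz stable, then $\mathbf{X}$ contains exactly one solution of this equation, and that solution is the stabilizing solution (in particular it is Hermitian). *)

theory Defs
  imports "HOL-Analysis.Analysis"
begin

definition cadj :: "complex^'n^'n \<Rightarrow> complex^'n^'n" where
  "cadj M = (\<chi> i j. cnj (M $ j $ i))"

definition hermitian :: "complex^'n^'n \<Rightarrow> bool" where
  "hermitian M \<longleftrightarrow> cadj M = M"

definition is_eigenvalue :: "complex^'n^'n \<Rightarrow> complex \<Rightarrow> bool" where
  "is_eigenvalue M z \<longleftrightarrow> (\<exists>v. v \<noteq> 0 \<and> M *v v = z *s v)"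

definition hurwitz_stable :: "complex^'n^'n \<Rightarrow> bool" where
  "hurwitz_stable M \<longleftrightarrow> (\<forall>z. is_eigenvalue M z \<longrightarrow> Re z < 0)"

definition care_solution :: "complex^'n^'n \<Rightarrow> complex^'n^'n \<Rightarrow> complex^'n^'n \<Rightarrow> complex^'n^'n \<Rightarrow> bool" where
  "care_solution A G Q X \<longleftrightarrow> cadj A ** X + X ** A + Q = X ** G ** X"

definition stabilizing_solution :: "complex^'n^'n \<Rightarrow> complex^'n^'n \<Rightarrow> complex^'n^'n \<Rightarrow> complex^'n^'n \<Rightarrow> bool" where
  "stabilizing_solution A G Q X \<longleftrightarrow>
     care_solution A G Q X \<and> hermitian X \<and> hurwitz_stable (A - G ** X)"

definition interval_matrix :: "complex^'n^'n \<Rightarrow> complex^'n^'n \<Rightarrow> (complex^'n^'n) set" where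
  "interval_matrix L U = {M. \<forall>i j.
      Re (L $ i $ j) \<le> Re (M $ i $ j) \<and> Re (M $ i $ j) \<le> Re (U $ i $ j) \<and>
      Im (L $ i $ j) \<le> Im (M $ i $ j) \<and> Im (M $ i $ j) \<le> Im (U $ i $ j)}"

end

theory Submission
  imports Defs "HOL-Computational_Algebra.Fundamental_Theorem_Algebra"
begin

text \<open>If X1 and X2 solve the Riccati equation, their difference D = X1 - X2 satisfies the
  homogeneous Sylvester equation (A* - X2 G) D = D (G X1 - A). When A - G X1 and A - G X2*
  are Hurwitz stable, the two coefficient matrices have spectra in the open left and right
  half planes respectively, so D = 0. Applied to a solution X in the interval matrix and to its
  adjoint X* (again a solution, as G and Q are Hermitian) this shows X = X*; applied to two
  solutions in the interval matrix it gives uniqueness. The Sylvester uniqueness step is proved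
  by annihilating a vector x with a product of factors S - r I, r an eigenvalue of S, obtained
  by factoring a polynomial p with p(S) x = 0 over the complex numbers.\<close>

lemma matrix_sub_ldistrib:
  fixes A :: "'a::ring_1^'n^'m"
  shows "A ** (B - C) = A ** B - A ** C"
  by (vector matrix_matrix_mult_def sum_subtractf right_diff_distrib)

lemma matrix_sub_rdistrib:
  fixes A :: "'a::ring_1^'n^'m"
  shows "(B - C) ** A = B ** A - C ** A"
  by (vector matrix_matrix_mult_def sum_subtractf left_diff_distrib)

lemma mat_matrix_mult: "mat r ** (A :: 'a::semiring_1^'n^'m) = (\<chi> i j. r * A $ i $ j)"
  unfolding matrix_matrix_mult_def mat_def
  by (auto simp: vec_eq_iff if_distrib if_distribR cong: if_cong)

lemma matrix_mult_mat: "(A :: 'a::comm_semiring_1^'n^'m) ** mat r = (\<chi> i j. r * A $ i $ j)"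
  unfolding matrix_matrix_mult_def mat_def
  by (auto simp: vec_eq_iff if_distrib if_distribR mult.commute cong: if_cong)

lemma mat_matrix_mult_commute: "mat r ** (A :: 'a::comm_semiring_1^'n^'n) = A ** mat r"
  by (simp add: mat_matrix_mult matrix_mult_mat)

lemma mat_mult_mat: "mat a ** (mat b :: 'a::semiring_1^'n^'n) = mat (a * b)"
  by (subst mat_matrix_mult) (simp add: mat_def vec_eq_iff)

lemma matrix_vector_mult_mat: "mat r *v (v :: 'a::semiring_1^'n) = r *s v"
  unfolding matrix_vector_mult_def mat_def
  by (auto simp: vec_eq_iff if_distrib if_distribR cong: if_cong)

lemma matrix_vector_mult_smult:
  fixes A :: "'a::comm_semiring_1^'n^'m"
  shows "A *v (r *s v) = r *s (A *v v)"
  by (simp add: matrix_vector_mult_def vec_eq_iff sum_distrib_left mult_ac)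

lemma matrix_vector_mult_uminus:
  fixes A :: "'a::ring_1^'n^'m"
  shows "(- A) *v v = - (A *v v)"
  by (simp add: matrix_vector_mult_def vec_eq_iff sum_negf)

lemma cadj_add: "cadj (A + B) = cadj A + cadj B"
  by (simp add: cadj_def vec_eq_iff)

lemma cadj_diff: "cadj (A - B) = cadj A - cadj B"
  by (simp add: cadj_def vec_eq_iff)

lemma cadj_mat: "cadj (mat r) = mat (cnj r)"
  by (simp add: cadj_def vec_eq_iff mat_def)

lemma cadj_matrix_mult: "cadj (A ** B) = cadj B ** cadj A"
  by (simp add: cadj_def vec_eq_iff matrix_matrix_mult_def mult.commute)

lemma cadj_cadj [simp]: "cadj (cadj A) = A"
  by (simp add: cadj_def vec_eq_iff)

lemma det_cadj: "det (cadj M) = cnj (det M)"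
proof -
  have "cadj M = transpose (\<chi> i j. cnj (M $ i $ j))"
    by (simp add: cadj_def transpose_def)
  then have "det (cadj M) = det (\<chi> i j. cnj (M $ i $ j))"
    by (simp only: det_transpose)
  also have "\<dots> = cnj (det M)"
    by (simp add: det_def)
  finally show ?thesis .
qed

lemma is_eigenvalue_iff_kernel:
  "is_eigenvalue M z \<longleftrightarrow> (\<exists>v. v \<noteq> 0 \<and> (M - mat z) *v v = 0)"
  unfolding is_eigenvalue_def by (simp add: matrix_vector_mult_diff_rdistrib matrix_vector_mult_mat)

lemma is_eigenvalue_iff_det: "is_eigenvalue M z \<longleftrightarrow> det (M - mat z) = 0"
proof -
  have "(\<exists>v. v \<noteq> 0 \<and> (M - mat z) *v v = 0) \<longleftrightarrow> \<not> invertible (M - mat z)"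
    using matrix_left_invertible_ker[of "M - mat z"] invertible_left_inverse[of "M - mat z"]
    by blast
  then show ?thesis
    using is_eigenvalue_iff_kernel invertible_det_nz by blast
qed

lemma is_eigenvalue_cadj: "is_eigenvalue (cadj M) z \<longleftrightarrow> is_eigenvalue M (cnj z)"
proof -
  have "cadj M - mat z = cadj (M - mat (cnj z))"
    by (simp add: cadj_diff cadj_mat)
  then show ?thesis
    by (simp add: is_eigenvalue_iff_det det_cadj)
qed

lemma is_eigenvalue_uminus: "is_eigenvalue (- M) z \<longleftrightarrow> is_eigenvalue M (- z)"
  unfolding is_eigenvalue_def
  by (metis matrix_vector_mult_uminus minus_minus vector_sneg_minus1 vector_smult_assoc
      mult_minus1)

fun factor_prod :: "'a::ring_1^'n^'n \<Rightarrow> 'a list \<Rightarrow> 'a^'n^'n" where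
  "factor_prod S [] = mat 1"
| "factor_prod S (r # rs) = (S - mat r) ** factor_prod S rs"

lemma shifted_matrices_commute:
  fixes S :: "'a::comm_ring_1^'n^'n"
  shows "(S - mat a) ** (S - mat r) = (S - mat r) ** (S - mat a)"
  by (simp add: matrix_sub_ldistrib matrix_sub_rdistrib mat_matrix_mult_commute[of _ S]
      mat_mult_mat mult.commute)

lemma factor_prod_remove1:
  fixes S :: "'a::comm_ring_1^'n^'n"
  shows "r \<in> set rs \<Longrightarrow> factor_prod S rs = (S - mat r) ** factor_prod S (remove1 r rs)"
proof (induction rs)
  case (Cons a rs)
  show ?case
  proof (cases "a = r")
    case False
    then have "factor_prod S (a # rs) = (S - mat a) ** ((S - mat r) ** factor_prod S (remove1 r rs))"
      using Cons by simp
    also have "\<dots> = (S - mat r) ** ((S - mat a) ** factor_prod S (remove1 r rs))"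
      by (simp only: matrix_mul_assoc shifted_matrices_commute)
    finally show ?thesis
      using False by simp
  qed simp
qed simp

lemma factor_prod_intertwine:
  fixes B D S :: "'a::comm_ring_1^'n^'n"
  assumes "B ** D = D ** S"
  shows "factor_prod B rs ** D = D ** factor_prod S rs"
proof (induction rs)
  case (Cons r rs)
  have factor: "(B - mat r) ** D = D ** (S - mat r)"
    using assms by (simp add: matrix_sub_ldistrib matrix_sub_rdistrib mat_matrix_mult_commute)
  have "factor_prod B (r # rs) ** D = (B - mat r) ** (factor_prod B rs ** D)"
    by (simp add: matrix_mul_assoc)
  also have "\<dots> = ((B - mat r) ** D) ** factor_prod S rs"
    using Cons.IH by (simp add: matrix_mul_assoc)
  also have "\<dots> = D ** factor_prod S (r # rs)"
    by (simp add: factor matrix_mul_assoc)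
  finally show ?case .
qed simp

lemma factor_prod_kernel_eigenvalue:
  "factor_prod B rs *v y = 0 \<Longrightarrow> y \<noteq> 0 \<Longrightarrow> \<exists>r\<in>set rs. is_eigenvalue B r"
proof (induction rs)
  case (Cons r rs)
  show ?case
  proof (cases "factor_prod B rs *v y = 0")
    case False
    have "(B - mat r) *v (factor_prod B rs *v y) = 0"
      using Cons.prems by (simp add: matrix_vector_mul_assoc)
    then show ?thesis
      using False is_eigenvalue_iff_kernel by auto
  qed (use Cons in auto)
qed simp

definition poly_mat_vec :: "'a::comm_ring_1 poly \<Rightarrow> 'a^'n^'n \<Rightarrow> 'a^'n \<Rightarrow> 'a^'n" where
  "poly_mat_vec p S x = fold_coeffs (\<lambda>a v. a *s x + S *v v) p 0"

lemma poly_mat_vec_0 [simp]: "poly_mat_vec 0 S x = 0"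
  by (simp add: poly_mat_vec_def)

lemma poly_mat_vec_pCons [simp]: "poly_mat_vec (pCons a p) S x = a *s x + S *v poly_mat_vec p S x"
  by (cases "p = 0"; cases "a = 0") (simp_all add: poly_mat_vec_def)

lemma poly_mat_vec_add: "poly_mat_vec (p + q) S x = poly_mat_vec p S x + poly_mat_vec q S x"
proof (induction p arbitrary: q)
  case (pCons a p)
  obtain b q' where "q = pCons b q'"
    by (cases q)
  then show ?case
    by (simp add: pCons.IH matrix_vector_right_distrib vector_sadd_rdistrib algebra_simps)
qed simp

lemma poly_mat_vec_sum: "poly_mat_vec (\<Sum>i\<in>I. f i) S x = (\<Sum>i\<in>I. poly_mat_vec (f i) S x)"
  by (induction I rule: infinite_finite_induct) (simp_all add: poly_mat_vec_add)

lemma poly_mat_vec_smult: "poly_mat_vec (smult c p) S x = c *s poly_mat_vec p S x"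
  by (induction p)
    (simp_all add: matrix_vector_mult_smult vector_add_ldistrib vector_smult_assoc)

lemma poly_mat_vec_monom: "poly_mat_vec (monom a i) S x = a *s ((*v) S ^^ i) x"
  by (induction i) (simp_all add: monom_0 monom_Suc matrix_vector_mult_smult)

lemma poly_mat_vec_linear_factor:
  "poly_mat_vec ([:-r, 1:] * q) S x = (S - mat r) *v poly_mat_vec q S x"
proof -
  have factor: "[:-r, 1:] * q = smult (-r) q + pCons 0 q"
    by (simp add: mult_pCons_left)
  have "poly_mat_vec ([:-r, 1:] * q) S x = (-r) *s poly_mat_vec q S x + (0 *s x + S *v poly_mat_vec q S x)"
    by (simp only: factor poly_mat_vec_add poly_mat_vec_smult poly_mat_vec_pCons)
  then show ?thesis
    by (simp add: matrix_vector_mult_diff_rdistrib matrix_vector_mult_mat vector_smult_lneg)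
qed

lemma poly_mat_vec_linear_factors:
  "poly_mat_vec (\<Prod>r\<leftarrow>rs. [:-r, 1:]) S x = factor_prod S rs *v x"
  by (induction rs)
    (simp_all add: poly_mat_vec_linear_factor matrix_vector_mul_assoc one_pCons
      del: mult_pCons_left)

lemma matrix_powers_dependent:
  fixes S :: "'a::field^'n^'n"
  shows "\<exists>c. (\<exists>i\<le>CARD('n). c i \<noteq> 0) \<and> (\<Sum>i\<le>CARD('n). c i *s ((*v) S ^^ i) x) = 0"
proof -
  define f where "f i = ((*v) S ^^ i) x" for i
  show ?thesis
  proof (cases "inj_on f {..CARD('n)}")
    case True
    let ?V = "f ` {..CARD('n)}"
    have "card ?V = Suc CARD('n)"
      using True by (simp add: card_image)
    moreover have "vec.dim ?V \<le> CARD('n)"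
      by (rule dim_subset_UNIV_cart_gen)
    ultimately have "vec.dependent ?V"
      by (intro vec.dependent_biggerset_general) simp
    then obtain u where u: "\<exists>v\<in>?V. u v \<noteq> 0" "(\<Sum>v\<in>?V. u v *s v) = 0"
      using vec.dependent_finite[of ?V] by blast
    have "(\<Sum>v\<in>?V. u v *s v) = (\<Sum>i\<le>CARD('n). u (f i) *s f i)"
      using True by (simp add: sum.reindex)
    then show ?thesis
      using u by (intro exI[of _ "u \<circ> f"]) (auto simp: f_def)
  next
    case False
    then obtain i j where ij: "i \<le> CARD('n)" "j \<le> CARD('n)" "i \<noteq> j" "f i = f j"
      unfolding inj_on_def by auto
    define c where "c k = (if k = i then 1 else if k = j then - 1 else (0::'a))" for k
    have "c k *s f k = (if k = i then f i else 0) + (if k = j then - f j else 0)" for k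
      using ij(3) by (simp add: c_def)
    then have "(\<Sum>k\<le>CARD('n). c k *s f k) =
        (\<Sum>k\<le>CARD('n). if k = i then f i else 0) + (\<Sum>k\<le>CARD('n). if k = j then - f j else 0)"
      by (simp add: sum.distrib)
    also have "\<dots> = 0"
      using ij by simp
    finally show ?thesis
      using ij by (intro exI[of _ c]) (auto simp: c_def f_def)
  qed
qed

lemma annihilating_poly_exists:
  fixes S :: "'a::field^'n^'n"
  shows "\<exists>p. p \<noteq> 0 \<and> poly_mat_vec p S x = 0"
proof -
  obtain c where c: "\<exists>i\<le>CARD('n). c i \<noteq> 0" "(\<Sum>i\<le>CARD('n). c i *s ((*v) S ^^ i) x) = 0"
    using matrix_powers_dependent by blast
  define p where "p = (\<Sum>i\<le>CARD('n). monom (c i) i)"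
  obtain i where "i \<le> CARD('n)" "c i \<noteq> 0"
    using c(1) by blast
  then have "coeff p i \<noteq> 0"
    by (simp add: p_def coeff_sum coeff_monom)
  then have "p \<noteq> 0"
    by auto
  moreover have "poly_mat_vec p S x = 0"
    using c(2) by (simp add: p_def poly_mat_vec_sum poly_mat_vec_monom)
  ultimately show ?thesis
    by blast
qed

lemma factor_prod_annihilator_exists:
  fixes S :: "complex^'n^'n"
  shows "\<exists>rs. factor_prod S rs *v x = 0"
proof -
  obtain p where "p \<noteq> 0" and p: "poly_mat_vec p S x = 0"
    using annihilating_poly_exists by blast
  obtain rs where rs: "mset rs = proots p"
    using ex_mset by blast
  have "p = smult (lead_coeff p) (\<Prod>r\<leftarrow>rs. [:-r, 1:])"
    using complex_poly_decompose_multiset[of p] by (simp flip: rs prod_mset_prod_list)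
  then have "lead_coeff p *s (factor_prod S rs *v x) = 0"
    using p by (metis poly_mat_vec_smult poly_mat_vec_linear_factors)
  then show ?thesis
    using \<open>p \<noteq> 0\<close> by (auto simp: vec_eq_iff)
qed

text \<open>A shortest annihilating product contains only eigenvalues: dropping a factor S - r I
  leaves a nonzero vector, which that factor then sends to zero.\<close>
lemma eigenvalue_annihilator_exists:
  fixes S :: "complex^'n^'n"
  shows "\<exists>rs. (\<forall>r\<in>set rs. is_eigenvalue S r) \<and> factor_prod S rs *v x = 0"
proof -
  obtain rs where rs: "factor_prod S rs *v x = 0"
    and shortest: "\<And>rs'. factor_prod S rs' *v x = 0 \<Longrightarrow> length rs \<le> length rs'"
    using factor_prod_annihilator_exists
      ex_has_least_nat[of "\<lambda>rs. factor_prod S rs *v x = 0" _ length] by metis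
  have "is_eigenvalue S r" if r: "r \<in> set rs" for r
  proof -
    have "length (remove1 r rs) < length rs"
      using r length_pos_if_in_set[OF r] by (simp add: length_remove1)
    then have "factor_prod S (remove1 r rs) *v x \<noteq> 0"
      using shortest by force
    moreover have "(S - mat r) *v (factor_prod S (remove1 r rs) *v x) = 0"
      using rs factor_prod_remove1[OF r, of S] by (simp add: matrix_vector_mul_assoc)
    ultimately show ?thesis
      using is_eigenvalue_iff_kernel by blast
  qed
  with rs show ?thesis
    by blast
qed

lemma sylvester_homogeneous_eq_zero:
  fixes B D S :: "complex^'n^'n"
  assumes "B ** D = D ** S"
    and "\<And>z. is_eigenvalue B z \<Longrightarrow> \<not> is_eigenvalue S z"
  shows "D = 0"
proof -
  have "D *v x = 0" for x
  proof (rule ccontr)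
    assume Dx: "D *v x \<noteq> 0"
    obtain rs where eig: "\<forall>r\<in>set rs. is_eigenvalue S r" and ann: "factor_prod S rs *v x = 0"
      using eigenvalue_annihilator_exists by blast
    have "factor_prod B rs *v (D *v x) = D *v (factor_prod S rs *v x)"
      using factor_prod_intertwine[OF assms(1)] by (simp add: matrix_vector_mul_assoc)
    then obtain r where "r \<in> set rs" "is_eigenvalue B r"
      using factor_prod_kernel_eigenvalue Dx ann by fastforce
    then show False
      using eig assms(2) by blast
  qed
  then show ?thesis
    by (simp add: matrix_eq)
qed

lemma care_solution_cadj:
  assumes "hermitian G" "hermitian Q" "care_solution A G Q X"
  shows "care_solution A G Q (cadj X)"
proof -
  have "cadj (cadj A ** X + X ** A + Q) = cadj (X ** G ** X)"
    using assms(3) unfolding care_solution_def by simp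
  then show ?thesis
    using assms(1,2) unfolding care_solution_def hermitian_def
    by (simp add: cadj_add cadj_matrix_mult matrix_mul_assoc algebra_simps)
qed

lemma care_solution_diff_sylvester:
  assumes "care_solution A G Q X1" "care_solution A G Q X2"
  shows "(cadj A - X2 ** G) ** (X1 - X2) = (X1 - X2) ** (G ** X1 - A)"
proof -
  have "cadj A ** X1 = X1 ** G ** X1 - X1 ** A - Q" "cadj A ** X2 = X2 ** G ** X2 - X2 ** A - Q"
    using assms unfolding care_solution_def by (simp_all add: algebra_simps)
  then show ?thesis
    by (simp add: matrix_sub_ldistrib matrix_sub_rdistrib matrix_mul_assoc)
qed

lemma care_solutions_eq:
  assumes "hermitian G" "care_solution A G Q X1" "care_solution A G Q X2"
    and "hurwitz_stable (A - G ** X1)" "hurwitz_stable (A - G ** cadj X2)"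
  shows "X1 = X2"
proof -
  have B: "cadj A - X2 ** G = cadj (A - G ** cadj X2)"
    using assms(1) by (simp add: hermitian_def cadj_diff cadj_matrix_mult)
  have S: "G ** X1 - A = - (A - G ** X1)"
    by simp
  have "X1 - X2 = 0"
  proof (rule sylvester_homogeneous_eq_zero[OF care_solution_diff_sylvester[OF assms(2,3)]])
    fix z
    assume "is_eigenvalue (cadj A - X2 ** G) z"
    then have "Re z < 0"
      using assms(5) unfolding B is_eigenvalue_cadj hurwitz_stable_def by fastforce
    then show "\<not> is_eigenvalue (G ** X1 - A) z"
      using assms(4) unfolding S is_eigenvalue_uminus hurwitz_stable_def by fastforce
  qed
  then show ?thesis
    by simp
qed

theorem mainTheorem6:
  fixes A G Q L U :: "complex^'n^'n"
  assumes "hermitian G" and "hermitian Q"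
    and "\<exists>X\<in>interval_matrix L U. care_solution A G Q X"
    and "\<forall>M\<in>interval_matrix L U. hurwitz_stable (A - G ** M)"
  shows "(\<exists>!X. X \<in> interval_matrix L U \<and> care_solution A G Q X) \<and>
         (\<forall>X\<in>interval_matrix L U. care_solution A G Q X \<longrightarrow> stabilizing_solution A G Q X)"
proof -
  have herm: "cadj X = X" if "X \<in> interval_matrix L U" "care_solution A G Q X" for X
    using care_solutions_eq[OF assms(1) that(2) care_solution_cadj[OF assms(1,2) that(2)]]
      assms(4) that(1) by simp
  have "X1 = X2" if "X1 \<in> interval_matrix L U" "care_solution A G Q X1"
    "X2 \<in> interval_matrix L U" "care_solution A G Q X2" for X1 X2
    using care_solutions_eq[OF assms(1) that(2,4)] herm[OF that(3,4)] assms(4) that(1,3) by simp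
  with assms(3) herm assms(4) show ?thesis
    by (auto simp: stabilizing_solution_def hermitian_def)
qed

end
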